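(* Let $V$ be a real vector space of dimension $2n$ with basis $e_1,\dots,e_{2n}$ and symplectic form $\omega=e_{12}+e_{34}+\dots+e_{2n-1,2n}$ (where $e_{ij}=e_i\wedge e_j$). Then every primitive element $\mu_k\in P\bigwedge^kV$ can be written as $$\mu_k=e_1\wedge\beta_1+e_2\wedge\beta_2+\Big(e_{12}-\tfrac{1}{n-k+1}\sum_{j=2}^n e_{2j-1,2j}\Big)\wedge\beta_3+\beta_4,$$ where $\beta_1,\beta_2\in P\bigwedge^{k-1}V$, $\beta_3\in P\bigwedge^{k-2}V$, $\beta_4\in P\bigwedge^kV$, and none of $\beta_1,\dots,\beta_4$ involves $e_1$ or $e_2$ (i.e. they lie in the exterior algebra of $\mathrm{span}\{e_3,\dots,e_{2n}\}$).
   Context: On $\bigwedge^\bullet V$, $L(\alpha)=\omega\wedge\alpha$, $\Lambda$ is contraction with the bivector $\omega^{-1}$ (adjoint-type operator with $[\Lambda,L]=H$), and $H$ acts on $\bigwedge^kV$ as multiplication by $n-k$. An element $\mu\in\bigwedge^kV$ ($k\le n$) is primitive if $\Lambda\mu=0$; $P\bigwedge^kV$ is the space of primitive elements. The coefficient $\frac{1}{n-k+1}$ is what the paper writes as the operator $\frac{1}{H+1}$ applied to the resulting degree-$k$ element. *)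

theory Defs
  imports Complex_Main
begin

text \<open>A multivector is a coefficient function on finite index sets: alpha S is the
  coefficient of e_S = e_(s1) wedge ... wedge e_(sm) for S = {s1 < ... < sm}.\<close>

type_synonym mvec = "nat set \<Rightarrow> real"

definition ebasis :: "nat set \<Rightarrow> mvec" where
  "ebasis S = (\<lambda>T. if T = S then 1 else 0)"

definition mv_add :: "mvec \<Rightarrow> mvec \<Rightarrow> mvec" where
  "mv_add a b = (\<lambda>S. a S + b S)"

definition mv_scale :: "real \<Rightarrow> mvec \<Rightarrow> mvec" where
  "mv_scale c a = (\<lambda>S. c * a S)"

text \<open>Wedge product: e_S wedge e_T = (-1)^(number of pairs s in S, t in T, t < s) e_(S union T)
  when S, T are disjoint, and 0 otherwise.\<close>
definition wedge :: "mvec \<Rightarrow> mvec \<Rightarrow> mvec" where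
  "wedge a b = (\<lambda>U. \<Sum>S\<in>Pow U.
      (-1) ^ card {(s, t). s \<in> S \<and> t \<in> U - S \<and> t < s} * a S * b (U - S))"

text \<open>Homogeneous element of degree d of the exterior algebra of V = span{e_1..e_2n}.
  The degree is an integer so that negative degrees force the element to be 0.\<close>
definition homog :: "nat \<Rightarrow> int \<Rightarrow> mvec \<Rightarrow> bool" where
  "homog n d a \<longleftrightarrow> (\<forall>S. a S \<noteq> 0 \<longrightarrow> S \<subseteq> {1..2*n} \<and> int (card S) = d)"

text \<open>Interior product with the dual basis covector e^j:
  iota_j (e_j wedge e_S) = e_S for j not in S.\<close>
definition iota :: "nat \<Rightarrow> mvec \<Rightarrow> mvec" where
  "iota j a = (\<lambda>S. if j \<in> S then 0
                   else (-1) ^ card {s \<in> S. s < j} * a (insert j S))"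

text \<open>omega = e_12 + e_34 + ... + e_(2n-1,2n), L = omega wedge _,
  Lambda = contraction with the bivector omega^(-1); [Lambda, L] = H.\<close>
definition omega :: "nat \<Rightarrow> mvec" where
  "omega n = (\<lambda>S. \<Sum>i\<in>{1..n}. ebasis {2*i - 1, 2*i} S)"

definition Lam :: "nat \<Rightarrow> mvec \<Rightarrow> mvec" where
  "Lam n a = (\<lambda>S. \<Sum>i\<in>{1..n}. iota (2*i) (iota (2*i - 1) a) S)"

definition primitive :: "nat \<Rightarrow> int \<Rightarrow> mvec \<Rightarrow> bool" where
  "primitive n d a \<longleftrightarrow> homog n d a \<and> Lam n a = (\<lambda>_. 0)"

definition avoids12 :: "mvec \<Rightarrow> bool" where
  "avoids12 a \<longleftrightarrow> (\<forall>S. a S \<noteq> 0 \<longrightarrow> 1 \<notin> S \<and> 2 \<notin> S)"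

end

theory Submission
  imports Defs
begin

text \<open>Write \<open>\<mu> = e1 \<and> \<mu>1 + e2 \<and> \<mu>2 + e12 \<and> \<mu>12 + \<mu>0\<close> with all cofactors \<open>\<mu>_T\<close> free of \<open>e1, e2\<close>.
  On such elements \<open>\<Lambda>\<close> acts as the contraction \<open>\<Lambda>'\<close> of \<open>\<omega>' = \<omega> - e12\<close> on \<open>span {e3, ..., e2n}\<close>,
  and the remaining summand \<open>\<iota>\<^sub>2 \<iota>\<^sub>1\<close> of \<open>\<Lambda>\<close> only sends \<open>e12 \<and> \<mu>12\<close> to \<open>\<mu>12\<close>. So \<open>\<Lambda>\<mu> = 0\<close>
  says that \<open>\<mu>1, \<mu>2, \<mu>12\<close> are \<open>\<Lambda>'\<close>-primitive and \<open>\<Lambda>'\<mu>0 = -\<mu>12\<close>. The commutation relation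
  \<open>[\<Lambda>', L'] = H'\<close> in dimension \<open>2(n - 1)\<close> gives \<open>\<Lambda>'L'\<mu>12 = (n - k + 1) \<mu>12\<close> since \<open>\<mu>12\<close> has degree
  \<open>k - 2\<close>; hence \<open>\<beta>4 = \<mu>0 + L'\<mu>12 / (n - k + 1)\<close> is primitive, and
  \<open>e12 \<and> \<mu>12 + \<mu>0 = (e12 - \<omega>' / (n - k + 1)) \<and> \<mu>12 + \<beta>4\<close>.\<close>

definition pair :: "nat \<Rightarrow> nat set" where
  "pair i = {2*i - 1, 2*i}"

lemma pair_nonempty: "pair i \<noteq> {}"
  by (simp add: pair_def)

lemma pairs_disjoint: "1 \<le> i \<Longrightarrow> 1 \<le> j \<Longrightarrow> i \<noteq> j \<Longrightarrow> pair i \<inter> pair j = {}"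
  by (auto simp: pair_def)

lemma homog_nonzeroD:
  "homog n d a \<Longrightarrow> a U \<noteq> 0 \<Longrightarrow> finite U \<and> U \<subseteq> {1..2*n} \<and> int (card U) = d"
  unfolding homog_def by (meson finite_atLeastAtMost finite_subset)

lemma homog_add: "homog n d a \<Longrightarrow> homog n d b \<Longrightarrow> homog n d (mv_add a b)"
  unfolding homog_def mv_add_def by (metis add_0)

lemma homog_scale: "homog n d a \<Longrightarrow> homog n d (mv_scale r a)"
  by (simp add: homog_def mv_scale_def)

lemma avoids12_add: "avoids12 a \<Longrightarrow> avoids12 b \<Longrightarrow> avoids12 (mv_add a b)"
  unfolding avoids12_def mv_add_def by (metis add_0)

lemma avoids12_scale: "avoids12 a \<Longrightarrow> avoids12 (mv_scale r a)"
  by (simp add: avoids12_def mv_scale_def)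

lemma sum_nonzeroD: "(\<Sum>j\<in>J. f j) \<noteq> (0::real) \<Longrightarrow> \<exists>j\<in>J. f j \<noteq> 0"
  by (metis sum.neutral)

lemma sum_if_const:
  "finite A \<Longrightarrow> (\<Sum>i\<in>A. if P i then x else 0) = of_nat (card {i\<in>A. P i}) * (x::'a::semiring_1)"
  by (simp add: sum.inter_filter[symmetric])

lemma wedge_ebasis_left:
  "wedge (ebasis P) c U =
    (if finite U \<and> P \<subseteq> U
     then (-1) ^ card {(s, t). s \<in> P \<and> t \<in> U - P \<and> t < s} * c (U - P) else 0)"
proof (cases "finite U")
  case True
  have "wedge (ebasis P) c U = (\<Sum>S\<in>Pow U. if S = P
      then (-1) ^ card {(s, t). s \<in> P \<and> t \<in> U - P \<and> t < s} * c (U - P) else 0)"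
    unfolding wedge_def ebasis_def by (rule sum.cong) auto
  with True show ?thesis
    by simp
next
  case False
  then show ?thesis by (simp add: wedge_def)
qed

lemma wedge_add_left: "wedge (mv_add x y) c = mv_add (wedge x c) (wedge y c)"
  by (simp add: wedge_def mv_add_def algebra_simps sum.distrib fun_eq_iff)

lemma wedge_scale_left: "wedge (mv_scale r x) c = mv_scale r (wedge x c)"
  by (simp add: wedge_def mv_scale_def sum_distrib_left fun_eq_iff algebra_simps)

lemma wedge_sum_left: "wedge (\<lambda>S. \<Sum>j\<in>J. f j S) c = (\<lambda>U. \<Sum>j\<in>J. wedge (f j) c U)"
  unfolding wedge_def
  by (simp add: fun_eq_iff sum_distrib_left sum_distrib_right algebra_simps sum.swap[of _ J])

text \<open>A pair of adjacent indices moves past any index with an even number of swaps.\<close>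
lemma wedge_ebasis_pair:
  assumes "1 \<le> j" "finite U"
  shows "wedge (ebasis (pair j)) c U = (if pair j \<subseteq> U then c (U - pair j) else 0)"
proof -
  have "{(s, t). s \<in> pair j \<and> t \<in> U - pair j \<and> t < s} = pair j \<times> {t \<in> U - pair j. t < 2*j - 1}"
    using assms(1) by (auto simp: pair_def)
  moreover have "card (pair j) = 2"
    using assms(1) by (simp add: pair_def)
  ultimately show ?thesis
    using assms(2) by (simp add: wedge_ebasis_left card_cartesian_product)
qed

subsection \<open>The contraction \<open>\<Lambda>\<close> in coordinates\<close>

lemma Lam_eq: "Lam n a S = (\<Sum>i\<in>{1..n}. if pair i \<inter> S = {} then a (S \<union> pair i) else 0)"
  unfolding Lam_def
proof (rule sum.cong)
  fix i assume i: "i \<in> {1..n}"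
  show "iota (2*i) (iota (2*i - 1) a) S = (if pair i \<inter> S = {} then a (S \<union> pair i) else 0)"
  proof (cases "pair i \<inter> S = {}")
    case True
    have "s < 2*i - 1" if "s \<in> S" "s < 2*i" for s
      using that i True by (cases "s = 2*i - 1") (auto simp: pair_def)
    then have below: "{s \<in> insert (2*i) S. s < 2*i - 1} = {s \<in> S. s < 2*i - 1}"
                     "{s \<in> S. s < 2*i} = {s \<in> S. s < 2*i - 1}"
      by auto
    have "insert (2*i - 1) (insert (2*i) S) = S \<union> pair i"
      by (auto simp: pair_def)
    moreover have "(-1::real) ^ card {s \<in> S. s < 2*i - 1} * (-1) ^ card {s \<in> S. s < 2*i - 1} = 1"
      by (simp add: power_add[symmetric])
    ultimately show ?thesis
      using True i unfolding iota_def below by (auto simp: pair_def)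
  next
    case False
    then show ?thesis using i by (auto simp: iota_def pair_def)
  qed
qed simp

lemma Lam_add: "Lam n (mv_add x y) = mv_add (Lam n x) (Lam n y)"
  by (simp add: fun_eq_iff Lam_eq mv_add_def sum.distrib[symmetric] if_distrib cong: if_cong)

lemma Lam_scale: "Lam n (mv_scale r x) = mv_scale r (Lam n x)"
  by (simp add: fun_eq_iff Lam_eq mv_scale_def sum_distrib_left if_distrib cong: if_cong)

lemma Lam_avoids12:
  assumes "avoids12 x"
  shows "Lam n x S = (\<Sum>i\<in>{2..n}. if pair i \<inter> S = {} then x (S \<union> pair i) else 0)"
proof (cases "n = 0")
  case True
  then show ?thesis by (simp add: Lam_eq)
next
  case False
  then have "{1..n} = insert 1 {2..n}" by auto
  moreover have "x (S \<union> pair 1) = 0"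
    using assms unfolding avoids12_def pair_def by auto
  ultimately show ?thesis by (simp add: Lam_eq)
qed

subsection \<open>The operator \<open>L\<close> of the symplectic form on \<open>span {e3, ..., e2n}\<close>\<close>

definition Ltail :: "nat \<Rightarrow> mvec \<Rightarrow> mvec" where
  "Ltail n c = (\<lambda>U. \<Sum>j\<in>{2..n}. if pair j \<subseteq> U then c (U - pair j) else 0)"

lemma wedge_omega_tail:
  assumes "homog n d c"
  shows "wedge (\<lambda>S. \<Sum>j\<in>{2..n}. ebasis {2*j - 1, 2*j} S) c = Ltail n c"
  unfolding pair_def[symmetric] wedge_sum_left Ltail_def
proof (intro ext sum.cong)
  fix U j assume j: "j \<in> {2..n}"
  show "wedge (ebasis (pair j)) c U = (if pair j \<subseteq> U then c (U - pair j) else 0)"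
  proof (cases "finite U")
    case True
    then show ?thesis using j by (simp add: wedge_ebasis_pair)
  next
    case False
    then have "infinite (U - pair j)"
      by (simp add: pair_def)
    then have "c (U - pair j) = 0"
      using homog_nonzeroD[OF assms] by blast
    with False show ?thesis by (simp add: wedge_ebasis_left)
  qed
qed simp

lemma Ltail_nonzeroD:
  "Ltail n c U \<noteq> 0 \<Longrightarrow> \<exists>j\<in>{2..n}. pair j \<subseteq> U \<and> c (U - pair j) \<noteq> 0"
  unfolding Ltail_def by (force dest!: sum_nonzeroD split: if_splits)

lemma Ltail_avoids12: "avoids12 c \<Longrightarrow> avoids12 (Ltail n c)"
  unfolding avoids12_def
  by (force dest!: Ltail_nonzeroD simp: pair_def)

lemma Ltail_homog:
  assumes "homog n d c"
  shows "homog n (d + 2) (Ltail n c)"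
  unfolding homog_def
proof (intro allI impI)
  fix U assume "Ltail n c U \<noteq> 0"
  then obtain j where j: "j \<in> {2..n}" "pair j \<subseteq> U" "c (U - pair j) \<noteq> 0"
    by (auto dest: Ltail_nonzeroD)
  from homog_nonzeroD[OF assms j(3)]
  have rest: "finite (U - pair j)" "U - pair j \<subseteq> {1..2*n}" "int (card (U - pair j)) = d"
    by auto
  have pair: "finite (pair j)" "pair j \<subseteq> {1..2*n}" "card (pair j) = 2"
    using j(1) by (auto simp: pair_def)
  have "U = (U - pair j) \<union> pair j"
    using j(2) by auto
  then have "card U = card (U - pair j) + card (pair j)"
    using rest(1) pair(1) by (metis Diff_disjoint card_Un_disjoint inf_commute)
  with pair show "U \<subseteq> {1..2*n} \<and> int (card U) = d + 2"
    using rest j(2) by auto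
qed

lemma Ltail_union_pair:
  assumes "i \<in> {2..n}" "pair i \<inter> S = {}"
  shows "Ltail n c (S \<union> pair i) =
    c S + (\<Sum>j\<in>{2..n}. if pair j \<subseteq> S then c (S - pair j \<union> pair i) else 0)"
proof -
  have "Ltail n c (S \<union> pair i) = (\<Sum>j\<in>{2..n}.
      (if j = i then c S else 0) + (if pair j \<subseteq> S then c (S - pair j \<union> pair i) else 0))"
    unfolding Ltail_def
  proof (rule sum.cong)
    fix j assume j: "j \<in> {2..n}"
    show "(if pair j \<subseteq> S \<union> pair i then c (S \<union> pair i - pair j) else 0) =
          (if j = i then c S else 0) + (if pair j \<subseteq> S then c (S - pair j \<union> pair i) else 0)"
    proof (cases "j = i")
      case True
      then show ?thesis using assms(2) pair_nonempty[of i]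
        by (auto simp: Un_Diff Diff_triv Int_commute)
    next
      case False
      then have "pair j \<inter> pair i = {}"
        using assms(1) j by (intro pairs_disjoint) auto
      then have "(pair j \<subseteq> S \<union> pair i) = (pair j \<subseteq> S)" "S \<union> pair i - pair j = S - pair j \<union> pair i"
        by blast+
      with False show ?thesis by simp
    qed
  qed simp
  with assms(1) show ?thesis
    by (simp add: sum.distrib)
qed

lemma Lam_diff_pair:
  assumes "avoids12 c" "j \<in> {2..n}" "pair j \<subseteq> S"
  shows "Lam n c (S - pair j) =
    c S + (\<Sum>i\<in>{2..n}. if pair i \<inter> S = {} then c (S - pair j \<union> pair i) else 0)"
proof -
  have "Lam n c (S - pair j) = (\<Sum>i\<in>{2..n}.
      (if i = j then c S else 0) + (if pair i \<inter> S = {} then c (S - pair j \<union> pair i) else 0))"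
    unfolding Lam_avoids12[OF assms(1)]
  proof (rule sum.cong)
    fix i assume i: "i \<in> {2..n}"
    show "(if pair i \<inter> (S - pair j) = {} then c (S - pair j \<union> pair i) else 0) =
          (if i = j then c S else 0) + (if pair i \<inter> S = {} then c (S - pair j \<union> pair i) else 0)"
    proof (cases "i = j")
      case True
      then show ?thesis using assms(3) pair_nonempty[of j]
        by (auto simp: Un_absorb2 Diff_partition)
    next
      case False
      then have "pair i \<inter> pair j = {}"
        using assms(2) i by (intro pairs_disjoint) auto
      then have "(pair i \<inter> (S - pair j) = {}) = (pair i \<inter> S = {})"
        by blast
      with False show ?thesis by simp
    qed
  qed simp
  with assms(2) show ?thesis
    by (simp add: sum.distrib)
qed

text \<open>Call a pair free if it is disjoint from \<open>S\<close> and full if it lies in \<open>S\<close>. Both sides share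
  the cross term in which a full pair is traded for a free one; what remains counts free and full
  pairs.\<close>
lemma Lam_Ltail_commutator_pairs:
  assumes "avoids12 c"
  shows "Lam n (Ltail n c) S - Ltail n (Lam n c) S =
    (real (card {i\<in>{2..n}. pair i \<inter> S = {}}) - real (card {i\<in>{2..n}. pair i \<subseteq> S})) * c S"
proof -
  define cross where "cross = (\<Sum>i\<in>{2..n}. \<Sum>j\<in>{2..n}.
    if pair i \<inter> S = {} \<and> pair j \<subseteq> S then c (S - pair j \<union> pair i) else 0)"
  have "Lam n (Ltail n c) S =
      (\<Sum>i\<in>{2..n}. if pair i \<inter> S = {} then Ltail n c (S \<union> pair i) else 0)"
    by (rule Lam_avoids12[OF Ltail_avoids12[OF assms]])
  also have "\<dots> = (\<Sum>i\<in>{2..n}. (if pair i \<inter> S = {} then c S else 0) + (\<Sum>j\<in>{2..n}.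
      if pair i \<inter> S = {} \<and> pair j \<subseteq> S then c (S - pair j \<union> pair i) else 0))"
  proof (rule sum.cong)
    fix i assume i: "i \<in> {2..n}"
    show "(if pair i \<inter> S = {} then Ltail n c (S \<union> pair i) else 0) = (if pair i \<inter> S = {} then c S else 0)
      + (\<Sum>j\<in>{2..n}. if pair i \<inter> S = {} \<and> pair j \<subseteq> S then c (S - pair j \<union> pair i) else 0)"
    proof (cases "pair i \<inter> S = {}")
      case True
      show ?thesis
        unfolding Ltail_union_pair[OF i True] using True by simp
    qed simp
  qed simp
  also have "\<dots> = (\<Sum>i\<in>{2..n}. if pair i \<inter> S = {} then c S else 0) + cross"
    unfolding cross_def by (rule sum.distrib)
  finally have LL: "Lam n (Ltail n c) S = (\<Sum>i\<in>{2..n}. if pair i \<inter> S = {} then c S else 0) + cross" .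
  have "Ltail n (Lam n c) S =
      (\<Sum>j\<in>{2..n}. if pair j \<subseteq> S then Lam n c (S - pair j) else 0)"
    by (simp add: Ltail_def)
  also have "\<dots> = (\<Sum>j\<in>{2..n}. (if pair j \<subseteq> S then c S else 0) + (\<Sum>i\<in>{2..n}.
      if pair i \<inter> S = {} \<and> pair j \<subseteq> S then c (S - pair j \<union> pair i) else 0))"
  proof (rule sum.cong)
    fix j assume j: "j \<in> {2..n}"
    show "(if pair j \<subseteq> S then Lam n c (S - pair j) else 0) = (if pair j \<subseteq> S then c S else 0)
      + (\<Sum>i\<in>{2..n}. if pair i \<inter> S = {} \<and> pair j \<subseteq> S then c (S - pair j \<union> pair i) else 0)"
    proof (cases "pair j \<subseteq> S")
      case True
      show ?thesis
        unfolding Lam_diff_pair[OF assms j True] using True by simp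
    qed simp
  qed simp
  also have "\<dots> = (\<Sum>j\<in>{2..n}. if pair j \<subseteq> S then c S else 0) + (\<Sum>j\<in>{2..n}. \<Sum>i\<in>{2..n}.
      if pair i \<inter> S = {} \<and> pair j \<subseteq> S then c (S - pair j \<union> pair i) else 0)"
    by (rule sum.distrib)
  also have "(\<Sum>j\<in>{2..n}. \<Sum>i\<in>{2..n}.
      if pair i \<inter> S = {} \<and> pair j \<subseteq> S then c (S - pair j \<union> pair i) else 0) = cross"
    unfolding cross_def by (rule sum.swap)
  finally have LLam: "Ltail n (Lam n c) S = (\<Sum>j\<in>{2..n}. if pair j \<subseteq> S then c S else 0) + cross" .
  show ?thesis
    unfolding LL LLam by (simp add: sum_if_const left_diff_distrib)
qed

lemma card_inter_pair:
  assumes "1 \<le> i"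
  shows "card (S \<inter> pair i) + (if pair i \<inter> S = {} then 1 else 0) = 1 + (if pair i \<subseteq> S then 1 else 0)"
proof -
  have ne: "2*i - 1 \<noteq> 2*i"
    using assms by auto
  show ?thesis
  proof (cases "2*i - 1 \<in> S"; cases "2*i \<in> S")
    assume "2*i - 1 \<in> S" "2*i \<in> S"
    then have "S \<inter> pair i = pair i" "pair i \<subseteq> S"
      by (auto simp: pair_def)
    then show ?thesis
      using ne by (simp add: pair_def)
  next
    assume "2*i - 1 \<in> S" "2*i \<notin> S"
    then have "S \<inter> pair i = {2*i - 1}" "pair i \<inter> S \<noteq> {}" "\<not> pair i \<subseteq> S"
      by (auto simp: pair_def)
    then show ?thesis
      by simp
  next
    assume "2*i - 1 \<notin> S" "2*i \<in> S"
    then have "S \<inter> pair i = {2*i}" "pair i \<inter> S \<noteq> {}" "\<not> pair i \<subseteq> S"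
      by (auto simp: pair_def)
    then show ?thesis
      by simp
  next
    assume "2*i - 1 \<notin> S" "2*i \<notin> S"
    then have "S \<inter> pair i = {}" "pair i \<inter> S = {}"
      by (auto simp: pair_def)
    then show ?thesis
      by (simp add: pair_def)
  qed
qed

text \<open>A subset of \<open>{3..2n}\<close> with \<open>f\<close> free and \<open>p\<close> full pairs among the \<open>n - 1\<close> pairs
  has \<open>2p + (n - 1 - f - p)\<close> elements.\<close>
lemma card_free_minus_full_pairs:
  assumes "1 \<le> n" "S \<subseteq> {1..2*n}" "1 \<notin> S" "2 \<notin> S"
  shows "real (card {i\<in>{2..n}. pair i \<inter> S = {}}) - real (card {i\<in>{2..n}. pair i \<subseteq> S})
    = real n - 1 - real (card S)"
proof -
  have cover: "S = (\<Union>i\<in>{2..n}. S \<inter> pair i)"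
  proof (intro equalityI subsetI)
    fix x assume x: "x \<in> S"
    then have "x \<in> {1..2*n}" "x \<noteq> 1" "x \<noteq> 2"
      using assms by auto
    then have "3 \<le> x" "x \<le> 2*n"
      by auto
    then have "(x + 1) div 2 \<in> {2..n}" "x \<in> pair ((x + 1) div 2)"
      by (auto simp: pair_def)
    with x show "x \<in> (\<Union>i\<in>{2..n}. S \<inter> pair i)"
      by blast
  qed auto
  have "card S = (\<Sum>i\<in>{2..n}. card (S \<inter> pair i))"
    by (subst cover, rule card_UN_disjoint) (auto simp: pair_def)
  then have "card S + card {i\<in>{2..n}. pair i \<inter> S = {}} =
      (\<Sum>i\<in>{2..n}. card (S \<inter> pair i) + (if pair i \<inter> S = {} then 1 else 0))"
    by (simp add: sum.distrib sum_if_const)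
  also have "\<dots> = (\<Sum>i\<in>{2..n}. 1 + (if pair i \<subseteq> S then 1 else 0))"
    by (rule sum.cong) (simp_all add: card_inter_pair)
  also have "\<dots> = n - 1 + card {i\<in>{2..n}. pair i \<subseteq> S}"
    unfolding sum.distrib sum_if_const[OF finite_atLeastAtMost] by simp
  finally show ?thesis
    using assms(1) by (simp flip: of_nat_add)
qed

text \<open>\<open>[\<Lambda>, L] = H\<close> on \<open>span {e3, ..., e2n}\<close>, whose dimension is \<open>2(n - 1)\<close>.\<close>
lemma Lam_Ltail_commutator:
  assumes "1 \<le> n" "homog n d c" "avoids12 c"
  shows "Lam n (Ltail n c) S = Ltail n (Lam n c) S + (real n - 1 - of_int d) * c S"
proof (cases "c S = 0")
  case True
  then show ?thesis
    using Lam_Ltail_commutator_pairs[OF assms(3), of n S] by simp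
next
  case False
  with homog_nonzeroD[OF assms(2)] assms(3)
  have "S \<subseteq> {1..2*n}" "1 \<notin> S" "2 \<notin> S" and card: "int (card S) = d"
    unfolding avoids12_def by blast+
  then have "real (card {i\<in>{2..n}. pair i \<inter> S = {}}) - real (card {i\<in>{2..n}. pair i \<subseteq> S})
      = real n - 1 - of_int d"
    unfolding card[symmetric] using card_free_minus_full_pairs[OF assms(1)] by simp
  with Lam_Ltail_commutator_pairs[OF assms(3), of n S]
  have "Lam n (Ltail n c) S - Ltail n (Lam n c) S = (real n - 1 - of_int d) * c S"
    by simp
  then show ?thesis
    by simp
qed

lemma Lam_Ltail_primitive:
  assumes "1 \<le> n" "homog n d c" "avoids12 c" "Lam n c = (\<lambda>_. 0)"
  shows "Lam n (Ltail n c) = mv_scale (real n - 1 - of_int d) c"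
proof
  fix S
  have "Ltail n (Lam n c) S = 0"
    by (simp add: assms(4) Ltail_def)
  with Lam_Ltail_commutator[OF assms(1-3)] show "Lam n (Ltail n c) S = mv_scale (real n - 1 - of_int d) c S"
    by (simp add: mv_scale_def)
qed

subsection \<open>Splitting off \<open>e1\<close> and \<open>e2\<close>\<close>

text \<open>For \<open>T \<subseteq> {1, 2}\<close>, \<open>cofactor \<mu> T\<close> is the coefficient of \<open>e_T\<close> when \<open>\<mu>\<close> is written as
  \<open>\<Sum>T. e_T \<and> \<mu>_T\<close> with every \<open>\<mu>_T\<close> free of \<open>e1, e2\<close>.\<close>
definition cofactor :: "mvec \<Rightarrow> nat set \<Rightarrow> mvec" where
  "cofactor \<mu> T = (\<lambda>S. if 1 \<in> S \<or> 2 \<in> S then 0 else \<mu> (T \<union> S))"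

lemma cofactor_avoids12: "avoids12 (cofactor \<mu> T)"
  by (simp add: avoids12_def cofactor_def)

lemma cofactor_homog:
  assumes "homog n k \<mu>" "T \<subseteq> {1, 2}"
  shows "homog n (k - int (card T)) (cofactor \<mu> T)"
  unfolding homog_def
proof (intro allI impI)
  fix S assume "cofactor \<mu> T S \<noteq> 0"
  then have S: "\<mu> (T \<union> S) \<noteq> 0" "1 \<notin> S" "2 \<notin> S"
    by (auto simp: cofactor_def split: if_splits)
  from homog_nonzeroD[OF assms(1) S(1)]
  have TS: "finite (T \<union> S)" "T \<union> S \<subseteq> {1..2*n}" "int (card (T \<union> S)) = k"
    by auto
  have "T \<inter> S = {}"
    using S assms(2) by auto
  with TS(1) have "card (T \<union> S) = card T + card S"
    by (simp add: card_Un_disjoint)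
  with TS show "S \<subseteq> {1..2*n} \<and> int (card S) = k - int (card T)"
    by auto
qed

text \<open>\<open>\<Lambda>\<close> is \<open>\<iota>\<^sub>2 \<iota>\<^sub>1\<close> plus the contraction on \<open>span {e3, ..., e2n}\<close>, and only the
  first summand mixes the cofactors.\<close>
lemma cofactor_Lam:
  assumes "1 \<le> n" "T \<subseteq> {1, 2}"
  shows "cofactor (Lam n \<mu>) T S = Lam n (cofactor \<mu> T) S + (if T = {} then cofactor \<mu> {1, 2} S else 0)"
proof (cases "1 \<in> S \<or> 2 \<in> S")
  case True
  then have "Lam n (cofactor \<mu> T) S = 0"
    unfolding Lam_avoids12[OF cofactor_avoids12] by (auto simp: cofactor_def intro!: sum.neutral)
  with True show ?thesis
    by (simp add: cofactor_def)
next
  case False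
  have "{1..n} = insert 1 {2..n}"
    using assms(1) by auto
  then have "Lam n \<mu> (T \<union> S) = (if T = {} then \<mu> (S \<union> pair 1) else 0)
      + (\<Sum>i\<in>{2..n}. if pair i \<inter> (T \<union> S) = {} then \<mu> (T \<union> S \<union> pair i) else 0)"
    using assms(2) False by (auto simp: Lam_eq pair_def)
  also have "(\<Sum>i\<in>{2..n}. if pair i \<inter> (T \<union> S) = {} then \<mu> (T \<union> S \<union> pair i) else 0)
      = Lam n (cofactor \<mu> T) S"
    unfolding Lam_avoids12[OF cofactor_avoids12]
  proof (rule sum.cong)
    fix i assume i: "i \<in> {2..n}"
    then have "pair i \<inter> T = {}" "1 \<notin> S \<union> pair i" "2 \<notin> S \<union> pair i"
      using assms(2) False by (auto simp: pair_def)
    then show "(if pair i \<inter> (T \<union> S) = {} then \<mu> (T \<union> S \<union> pair i) else 0) =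
        (if pair i \<inter> S = {} then cofactor \<mu> T (S \<union> pair i) else 0)"
      by (simp add: cofactor_def Int_Un_distrib Un_assoc)
  qed simp
  finally show ?thesis
    using False by (simp add: cofactor_def pair_def Un_commute)
qed

lemma wedge_ebasis_cofactor:
  assumes "homog n k \<mu>" "T \<subseteq> {1, 2}"
  shows "wedge (ebasis T) (cofactor \<mu> T) U = (if U \<inter> {1, 2} = T then \<mu> U else 0)"
proof (cases "\<mu> U \<noteq> 0 \<and> U \<inter> {1, 2} = T")
  case True
  with homog_nonzeroD[OF assms(1)] have U: "finite U" "U \<subseteq> {1..2*n}" "T \<subseteq> U"
    by auto
  have no_inversions: "{(s, t). s \<in> T \<and> t \<in> U - T \<and> t < s} = {}"
  proof (rule ccontr)
    assume "{(s, t). s \<in> T \<and> t \<in> U - T \<and> t < s} \<noteq> {}"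
    then obtain s t where "s \<in> T" "t \<in> U" "t \<notin> T" "t < s"
      by auto
    moreover from this have "t = 1"
      using U(2) assms(2) by force
    ultimately show False
      using True by auto
  qed
  moreover have "cofactor \<mu> T (U - T) = \<mu> U"
    using True U(3) by (auto simp: cofactor_def Un_absorb1)
  ultimately show ?thesis
    using True U unfolding wedge_ebasis_left no_inversions by simp
next
  case False
  have "cofactor \<mu> T (U - T) = 0" if "T \<subseteq> U"
    using False that assms(2) by (auto simp: cofactor_def Un_absorb1)
  with False show ?thesis
    by (auto simp: wedge_ebasis_left)
qed

lemma cofactor_decomposition:
  assumes "homog n k \<mu>"
  shows "\<mu> = mv_add (wedge (ebasis {1}) (cofactor \<mu> {1}))
               (mv_add (wedge (ebasis {2}) (cofactor \<mu> {2}))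
                 (mv_add (wedge (ebasis {1, 2}) (cofactor \<mu> {1, 2})) (cofactor \<mu> {})))"
proof
  fix U
  have "cofactor \<mu> {} U = (if U \<inter> {1, 2} = {} then \<mu> U else 0)"
    by (auto simp: cofactor_def)
  then show "\<mu> U = mv_add (wedge (ebasis {1}) (cofactor \<mu> {1}))
               (mv_add (wedge (ebasis {2}) (cofactor \<mu> {2}))
                 (mv_add (wedge (ebasis {1, 2}) (cofactor \<mu> {1, 2})) (cofactor \<mu> {}))) U"
    by (simp add: mv_add_def wedge_ebasis_cofactor[OF assms]) (cases "1 \<in> U"; cases "2 \<in> U"; auto)
qed

lemma Lam_cofactor_primitive:
  assumes "1 \<le> n" "Lam n \<mu> = (\<lambda>_. 0)" "T \<subseteq> {1, 2}"
  shows "Lam n (cofactor \<mu> T) = (if T = {} then mv_scale (- 1) (cofactor \<mu> {1, 2}) else (\<lambda>_. 0))"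
proof
  fix S
  have "cofactor (Lam n \<mu>) T S = 0"
    using assms(2) by (simp add: cofactor_def)
  with cofactor_Lam[OF assms(1,3), of \<mu> S] show "Lam n (cofactor \<mu> T) S =
      (if T = {} then mv_scale (- 1) (cofactor \<mu> {1, 2}) else (\<lambda>_. 0)) S"
    by (cases "T = {}") (simp_all add: mv_scale_def eq_neg_iff_add_eq_0)
qed

lemma primitive_cofactor:
  assumes "1 \<le> n" "primitive n k \<mu>" "T \<subseteq> {1, 2}" "T \<noteq> {}"
  shows "primitive n (k - int (card T)) (cofactor \<mu> T)"
  using cofactor_homog[of n k \<mu> T] Lam_cofactor_primitive[OF assms(1), of \<mu> T] assms(2-4)
  by (simp add: primitive_def)

lemma primitive_cofactor_corrected:
  assumes "1 \<le> n" "k \<le> n" "primitive n (int k) \<mu>"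
  shows "primitive n (int k)
    (mv_add (cofactor \<mu> {}) (mv_scale (1 / (real n - real k + 1)) (Ltail n (cofactor \<mu> {1, 2}))))"
proof -
  have hom: "homog n (int k) \<mu>" and prim: "Lam n \<mu> = (\<lambda>_. 0)"
    using assms(3) by (auto simp: primitive_def)
  define \<beta>3 where "\<beta>3 = cofactor \<mu> {1, 2}"
  have hom3: "homog n (int k - 2) \<beta>3"
    using cofactor_homog[OF hom, of "{1, 2}"] by (simp add: \<beta>3_def)
  have "Lam n (Ltail n \<beta>3) = mv_scale (real n - real k + 1) \<beta>3"
    using Lam_Ltail_primitive[OF assms(1) hom3] Lam_cofactor_primitive[OF assms(1) prim, of "{1, 2}"]
    by (simp add: \<beta>3_def cofactor_avoids12 add.commute)
  moreover have "real n - real k + 1 \<noteq> 0"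
    using assms(2) by simp
  moreover have "homog n (int k) (Ltail n \<beta>3)"
    using Ltail_homog[OF hom3] by simp
  ultimately show ?thesis
    using cofactor_homog[OF hom, of "{}"] Lam_cofactor_primitive[OF assms(1) prim, of "{}"]
    unfolding primitive_def \<beta>3_def[symmetric] Lam_add Lam_scale
    by (simp add: homog_add homog_scale) (simp add: mv_add_def mv_scale_def fun_eq_iff)
qed

lemma cofactor_decomposition_corrected:
  assumes "homog n k \<mu>"
  shows "\<mu> = mv_add (wedge (ebasis {1}) (cofactor \<mu> {1}))
                 (mv_add (wedge (ebasis {2}) (cofactor \<mu> {2}))
                   (mv_add (wedge (mv_add (ebasis {1, 2})
                                     (mv_scale (- 1 / h) (\<lambda>S. \<Sum>j\<in>{2..n}. ebasis {2*j - 1, 2*j} S)))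
                                  (cofactor \<mu> {1, 2}))
                     (mv_add (cofactor \<mu> {}) (mv_scale (1 / h) (Ltail n (cofactor \<mu> {1, 2}))))))"
proof -
  have hom12: "homog n (k - 2) (cofactor \<mu> {1, 2})"
    using cofactor_homog[OF assms, of "{1, 2}"] by simp
  have split: "wedge (mv_add (ebasis {1, 2}) (mv_scale (- 1 / h)
      (\<lambda>S. \<Sum>j\<in>{2..n}. ebasis {2*j - 1, 2*j} S))) (cofactor \<mu> {1, 2})
      = mv_add (wedge (ebasis {1, 2}) (cofactor \<mu> {1, 2})) (mv_scale (- 1 / h) (Ltail n (cofactor \<mu> {1, 2})))"
    unfolding wedge_add_left wedge_scale_left wedge_omega_tail[OF hom12] ..
  have cancel: "mv_add (mv_add w (mv_scale (- 1 / h) L)) (mv_add c (mv_scale (1 / h) L)) = mv_add w c"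
    for w c L :: mvec
    by (simp add: mv_add_def mv_scale_def fun_eq_iff)
  show ?thesis
    unfolding split cancel by (rule cofactor_decomposition[OF assms])
qed

theorem lemma2p3:
  fixes n k :: nat and \<mu> :: mvec
  assumes "1 \<le> n" and "k \<le> n"
    and "primitive n (int k) \<mu>"
  shows "\<exists>\<beta>1 \<beta>2 \<beta>3 \<beta>4.
           primitive n (int k - 1) \<beta>1 \<and> primitive n (int k - 1) \<beta>2 \<and>
           primitive n (int k - 2) \<beta>3 \<and> primitive n (int k) \<beta>4 \<and>
           avoids12 \<beta>1 \<and> avoids12 \<beta>2 \<and> avoids12 \<beta>3 \<and> avoids12 \<beta>4 \<and>
           \<mu> = mv_add (wedge (ebasis {1}) \<beta>1)
                 (mv_add (wedge (ebasis {2}) \<beta>2)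
                   (mv_add (wedge (mv_add (ebasis {1, 2})
                                     (mv_scale (- 1 / (real n - real k + 1))
                                        (\<lambda>S. \<Sum>j\<in>{2..n}. ebasis {2*j - 1, 2*j} S)))
                                  \<beta>3)
                     \<beta>4))"
proof -
  let ?\<beta>4 = "mv_add (cofactor \<mu> {})
    (mv_scale (1 / (real n - real k + 1)) (Ltail n (cofactor \<mu> {1, 2})))"
  have "primitive n (int k - 1) (cofactor \<mu> {1})" "primitive n (int k - 1) (cofactor \<mu> {2})"
    "primitive n (int k - 2) (cofactor \<mu> {1, 2})"
    using primitive_cofactor[OF assms(1,3), of "{1}"] primitive_cofactor[OF assms(1,3), of "{2}"]
      primitive_cofactor[OF assms(1,3), of "{1, 2}"] by simp_all
  moreover have "primitive n (int k) ?\<beta>4"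
    by (rule primitive_cofactor_corrected[OF assms])
  moreover have "avoids12 ?\<beta>4"
    by (intro avoids12_add avoids12_scale Ltail_avoids12 cofactor_avoids12)
  moreover have "homog n (int k) \<mu>"
    using assms(3) by (simp add: primitive_def)
  note cofactor_decomposition_corrected[OF this, of "real n - real k + 1"]
  ultimately show ?thesis
    using cofactor_avoids12 by blast
qed

end
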